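(* Let $N\ge1$ and $T=1$, and let $q$ be the normalized polynomial defined in the context. Then $$q(z)=2\tan\frac{\pi}{2(N+1)}\sum_{j=1}^{N}\Bigl(1-\frac{j}{N+1}\Bigr)\sin\frac{\pi j}{N+1}\,z^{j-1},$$ and $q(-1)=\tan^2\frac{\pi}{2(N+1)}$.
   Context: Fix integers $T\ge 1$, $N\ge1$. Set $\psi_j=\dfrac{\pi(2+T(2j-1))}{2+(N-1)T}$. Define $\eta(z)=z(z+1)\prod_{j=1}^{\frac{N-2}{2}}(z-e^{i\psi_j})(z-e^{-i\psi_j})$ if $N$ is even, and $\eta(z)=z\prod_{j=1}^{\frac{N-1}{2}}(z-e^{i\psi_j})(z-e^{-i\psi_j})$ if $N$ is odd (empty products equal $1$). Let $$q(z)=\frac{KT}{2+(N-1)T}\left(\Bigl(\frac1T+N\Bigr)\frac{\eta(z)}{z}-\eta'(z)\right),$$ where the constant $K$ is chosen so that $q(1)=1$. *)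

theory Defs
  imports "HOL-Analysis.Analysis" "HOL-Computational_Algebra.Polynomial"
begin

definition psi :: "nat \<Rightarrow> nat \<Rightarrow> nat \<Rightarrow> real" where
  "psi T N j = pi * (2 + real T * (2 * real j - 1)) / (2 + (real N - 1) * real T)"

definition eta_poly :: "nat \<Rightarrow> nat \<Rightarrow> complex poly" where
  "eta_poly T N =
     (if even N then
        [:0, 1:] * [:1, 1:] *
        (\<Prod>j\<in>{1..(N - 2) div 2}. [:- cis (psi T N j), 1:] * [:- cis (- psi T N j), 1:])
      else
        [:0, 1:] *
        (\<Prod>j\<in>{1..(N - 1) div 2}. [:- cis (psi T N j), 1:] * [:- cis (- psi T N j), 1:]))"

text \<open>Unnormalised bracket: (1/T + N) eta(z)/z - eta'(z). eta(z)/z is exact polynomial division by z.\<close>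
definition q_bracket :: "nat \<Rightarrow> nat \<Rightarrow> complex poly" where
  "q_bracket T N =
     smult (complex_of_real (1 / real T + real N)) (eta_poly T N div [:0, 1:]) - pderiv (eta_poly T N)"

text \<open>The constant K chosen so that q(1) = 1.\<close>
definition K_const :: "nat \<Rightarrow> nat \<Rightarrow> complex" where
  "K_const T N = complex_of_real (2 + (real N - 1) * real T) / (complex_of_real (real T) * poly (q_bracket T N) 1)"

definition q_poly :: "nat \<Rightarrow> nat \<Rightarrow> complex poly" where
  "q_poly T N = smult (K_const T N * complex_of_real (real T / (2 + (real N - 1) * real T))) (q_bracket T N)"

end

theory Submission
  imports Defs
begin

text \<open>
  For \<open>T = 1\<close> the angles \<open>\<psi>_j\<close> are the odd multiples of \<open>\<theta> = \<pi>/(N+1)\<close> other than \<open>\<plusminus>\<theta>\<close>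
  (modulo \<open>2\<pi>\<close>). Hence \<open>\<eta>(z)/z\<close> times \<open>D(z) = (z - e^(i\<theta>))(z - e^(-i\<theta>))\<close> is the monic
  polynomial of degree \<open>N+1\<close> vanishing at all \<open>(N+1)\<close>-st roots of \<open>-1\<close>, namely \<open>z^(N+1) + 1\<close>.
  The Chebyshev recurrence gives the same product for \<open>P(z) = \<Sum>_(k<N) U_k(cos \<theta>) z^k\<close>, so
  \<open>\<eta>(z) = z P(z)\<close> and the bracket in \<open>q\<close> is \<open>N P(z) - z P'(z) = \<Sum>_(k<N) (N-k) U_k(cos \<theta>) z^k\<close>.
  Differentiating \<open>D P = z^(N+1) + 1\<close> at \<open>z = \<plusminus>1\<close>, where \<open>z D'(z) = D(z)\<close>, shows that \<open>D(\<plusminus>1)\<close>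
  times the bracket at \<open>\<plusminus>1\<close> is \<open>N+1\<close>. This determines the normalisation, and
  \<open>q(-1) = D(1)/D(-1) = (1 - cos \<theta>)/(1 + cos \<theta>) = tan\<^sup>2(\<theta>/2)\<close>.
\<close>

text \<open>\<open>chebyshev_U \<theta> k\<close> is \<open>U\<^sub>k(cos \<theta>)\<close>, the Chebyshev polynomial of the second kind.\<close>

definition chebyshev_U :: "real \<Rightarrow> nat \<Rightarrow> real" where
  "chebyshev_U \<theta> k = sin (real (Suc k) * \<theta>) / sin \<theta>"

lemma chebyshev_U_Suc_Suc:
  "chebyshev_U \<theta> (Suc (Suc k)) = 2 * cos \<theta> * chebyshev_U \<theta> (Suc k) - chebyshev_U \<theta> k"
proof -
  have "sin (real (Suc (Suc (Suc k))) * \<theta>) = 2 * cos \<theta> * sin (real (Suc (Suc k)) * \<theta>) - sin (real (Suc k) * \<theta>)"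
    using sin_add[of "real (Suc (Suc k)) * \<theta>" \<theta>] sin_diff[of "real (Suc (Suc k)) * \<theta>" \<theta>]
    by (simp add: algebra_simps)
  then show ?thesis
    unfolding chebyshev_U_def by (simp add: diff_divide_distrib)
qed

lemma chebyshev_U_0: "sin \<theta> \<noteq> 0 \<Longrightarrow> chebyshev_U \<theta> 0 = 1"
  by (simp add: chebyshev_U_def)

lemma chebyshev_U_1: "sin \<theta> \<noteq> 0 \<Longrightarrow> chebyshev_U \<theta> (Suc 0) = 2 * cos \<theta>"
  by (simp add: chebyshev_U_def sin_double)

definition cis_quadratic :: "real \<Rightarrow> complex poly" where
  "cis_quadratic \<theta> = [:- cis \<theta>, 1:] * [:- cis (- \<theta>), 1:]"

lemma poly_cis_quadratic: "poly (cis_quadratic \<theta>) z = z\<^sup>2 - 2 * complex_of_real (cos \<theta>) * z + 1"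
proof -
  have "cis \<theta> + cis (- \<theta>) = 2 * complex_of_real (cos \<theta>)"
    by (simp add: complex_eq_iff)
  moreover have "cis \<theta> * cis (- \<theta>) = 1"
    by (simp add: cis_mult)
  ultimately show ?thesis
    unfolding cis_quadratic_def by (simp add: algebra_simps power2_eq_square)
qed

lemma poly_pderiv_cis_quadratic: "poly (pderiv (cis_quadratic \<theta>)) z = 2 * z - 2 * complex_of_real (cos \<theta>)"
proof -
  have "cis \<theta> + cis (- \<theta>) = 2 * complex_of_real (cos \<theta>)"
    by (simp add: complex_eq_iff)
  then show ?thesis
    unfolding cis_quadratic_def pderiv_mult by (simp add: pderiv_pCons algebra_simps)
qed

lemma X_mult_poly_pderiv_cis_quadratic:
  "z\<^sup>2 = 1 \<Longrightarrow> z * poly (pderiv (cis_quadratic \<theta>)) z = poly (cis_quadratic \<theta>) z"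
  by (simp add: poly_cis_quadratic poly_pderiv_cis_quadratic algebra_simps power2_eq_square)

lemma poly_cis_quadratic_one_minus_one:
  "poly (cis_quadratic \<theta>) 1 = complex_of_real (2 - 2 * cos \<theta>)"
  "poly (cis_quadratic \<theta>) (-1) = complex_of_real (2 + 2 * cos \<theta>)"
  by (simp_all add: poly_cis_quadratic)

lemma poly_cis_quadratic_root: "z = cis \<theta> \<or> z = cis (- \<theta>) \<Longrightarrow> poly (cis_quadratic \<theta>) z = 0"
  unfolding cis_quadratic_def by auto

lemma degree_cis_quadratic: "degree (cis_quadratic \<theta>) = 2"
  unfolding cis_quadratic_def by (subst degree_mult_eq) auto

lemma lead_coeff_cis_quadratic: "lead_coeff (cis_quadratic \<theta>) = 1"
  unfolding cis_quadratic_def by (simp add: lead_coeff_mult)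

lemma cis_quadratic_nonzero: "cis_quadratic \<theta> \<noteq> 0"
  using degree_cis_quadratic[of \<theta>] by auto

definition chebyshev_U_sum :: "real \<Rightarrow> nat \<Rightarrow> complex poly" where
  "chebyshev_U_sum \<theta> n = (\<Sum>k<n. monom (complex_of_real (chebyshev_U \<theta> k)) k)"

lemma cis_quadratic_mult_chebyshev_U_sum:
  assumes "sin \<theta> \<noteq> 0" "n \<ge> 1"
  shows "poly (cis_quadratic \<theta> * chebyshev_U_sum \<theta> n) z =
    1 - complex_of_real (chebyshev_U \<theta> n) * z ^ n + complex_of_real (chebyshev_U \<theta> (n - 1)) * z ^ (n + 1)"
  using assms(2)
proof (induction n rule: dec_induct)
  case base
  then show ?case
    using assms(1) by (simp add: chebyshev_U_sum_def poly_monom poly_cis_quadratic chebyshev_U_0 chebyshev_U_1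
        power2_eq_square algebra_simps)
next
  case (step n)
  then obtain m where m: "n = Suc m" by (cases n) auto
  have "chebyshev_U_sum \<theta> (Suc n) = chebyshev_U_sum \<theta> n + monom (complex_of_real (chebyshev_U \<theta> n)) n"
    by (simp add: chebyshev_U_sum_def)
  then show ?case
    using step.IH unfolding m
    by (simp add: poly_monom poly_cis_quadratic chebyshev_U_Suc_Suc power2_eq_square algebra_simps)
qed

definition neg_one_root :: "nat \<Rightarrow> nat \<Rightarrow> complex" where
  "neg_one_root n k = cis (pi * (2 * real k + 1) / real n)"

lemma neg_one_root_power: "n > 0 \<Longrightarrow> neg_one_root n k ^ n = -1"
proof -
  assume "n > 0"
  then have angle: "real n * (pi * (2 * real k + 1) / real n) = 2 * pi * real k + pi"
    by (simp add: field_simps)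
  have "neg_one_root n k ^ n = cis (2 * pi * real k + pi)"
    unfolding neg_one_root_def Complex.DeMoivre angle ..
  also have "\<dots> = -1"
    by (simp flip: cis_mult)
  finally show ?thesis .
qed

lemma cis_two_pi_minus: "cis (2 * pi - x) = cis (- x)"
  by (simp add: divide_inverse flip: cis_divide)

lemma inj_on_cis: "inj_on cis {0..<2 * pi}"
proof (rule inj_onI)
  fix a b assume "a \<in> {0..<2 * pi}" "b \<in> {0..<2 * pi}" "cis a = cis b"
  then show "a = b"
    using Arg2pi_unique[of 1 a "cis a"] Arg2pi_unique[of 1 b "cis b"] by (simp add: cis_conv_exp)
qed

lemma inj_on_neg_one_root: "inj_on (neg_one_root n) {..<n}"
proof (rule inj_onI)
  fix k l assume k: "k \<in> {..<n}" and l: "l \<in> {..<n}" and eq: "neg_one_root n k = neg_one_root n l"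
  have angle: "pi * (2 * real i + 1) / real n \<in> {0..<2 * pi}" if "i < n" for i
  proof -
    have "pi * (2 * real i + 1) < pi * (2 * real n)"
      using that by (intro mult_strict_left_mono) auto
    then show ?thesis using that by (simp add: field_simps)
  qed
  have "pi * (2 * real k + 1) / real n = pi * (2 * real l + 1) / real n"
    using inj_onD[OF inj_on_cis _ angle angle] eq k l unfolding neg_one_root_def by simp
  then show "k = l" using k by (auto simp: field_simps)
qed

lemma poly_smult_minus_X_pderiv_sum:
  fixes a :: "nat \<Rightarrow> 'a :: idom"
  shows "poly (smult (of_nat n) (\<Sum>k<n. monom (a k) k) - [:0, 1:] * pderiv (\<Sum>k<n. monom (a k) k)) z =
    (\<Sum>k<n. of_nat (n - k) * a k * z ^ k)"
proof -
  have pderiv_sum: "pderiv (\<Sum>k<n. monom (a k) k) = (\<Sum>k<n. pderiv (monom (a k) k))"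
    using higher_pderiv_sum[of 1] by simp
  have "z * poly (pderiv (monom (a k) k)) z = of_nat k * a k * z ^ k" for k
    by (cases k) (simp_all add: pderiv_monom poly_monom)
  then have "poly (smult (of_nat n) (\<Sum>k<n. monom (a k) k) - [:0, 1:] * pderiv (\<Sum>k<n. monom (a k) k)) z =
      (\<Sum>k<n. of_nat n * a k * z ^ k - of_nat k * a k * z ^ k)"
    by (simp add: poly_sum pderiv_sum poly_monom sum_distrib_left sum_subtractf mult.assoc)
  also have "\<dots> = (\<Sum>k<n. of_nat (n - k) * a k * z ^ k)"
    by (intro sum.cong) (auto simp: of_nat_diff algebra_simps)
  finally show ?thesis .
qed

lemma poly_mult_smult_minus_X_pderiv:
  fixes D P :: "'a :: idom poly"
  assumes "D * P = monom 1 (n + 1) + 1" and "x * poly (pderiv D) x = poly D x"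
  shows "poly D x * (of_nat n * poly P x - x * poly (pderiv P) x) = of_nat (n + 1)"
proof -
  have DP: "poly D x * poly P x = x ^ (n + 1) + 1"
    using arg_cong[OF assms(1), of "\<lambda>p. poly p x"] by (simp add: poly_monom)
  have "poly (pderiv D) x * poly P x + poly D x * poly (pderiv P) x = of_nat (n + 1) * x ^ n"
    using arg_cong[OF assms(1), of "\<lambda>p. poly (pderiv p) x"]
    by (simp add: pderiv_mult pderiv_add pderiv_monom poly_monom algebra_simps)
  then have "x * poly (pderiv D) x * poly P x + x * poly D x * poly (pderiv P) x = of_nat (n + 1) * (x * x ^ n)"
    by (metis distrib_left mult.assoc mult.left_commute)
  then have "poly D x * poly P x + x * poly D x * poly (pderiv P) x = of_nat (n + 1) * (x * x ^ n)"
    unfolding assms(2) .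
  then have DP': "x * poly D x * poly (pderiv P) x = of_nat (n + 1) * (x * x ^ n) - poly D x * poly P x"
    by (simp add: eq_diff_eq add.commute)
  have "poly D x * (of_nat n * poly P x - x * poly (pderiv P) x) =
      of_nat n * (poly D x * poly P x) - x * poly D x * poly (pderiv P) x"
    by (simp add: algebra_simps)
  also have "\<dots> = of_nat (n + 1) * (poly D x * poly P x) - of_nat (n + 1) * (x * x ^ n)"
    unfolding DP' by (simp add: algebra_simps)
  also have "\<dots> = of_nat (n + 1)"
    unfolding DP by (simp add: algebra_simps)
  finally show ?thesis .
qed

lemma
  fixes x :: real
  assumes "cos x \<noteq> -1"
  shows one_minus_cos_eq_tan_half_mul_sin: "1 - cos x = tan (x / 2) * sin x"
    and tan_half_squared: "tan (x / 2) ^ 2 = (1 - cos x) / (1 + cos x)"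
proof -
  have pos: "1 + cos x \<noteq> 0"
    using assms by linarith
  have tan: "tan (x / 2) = sin x / (1 + cos x)"
    using tan_half[of "x / 2"] by (simp add: add.commute)
  have sin2: "sin x ^ 2 = (1 - cos x) * (1 + cos x)"
    by (simp add: sin_squared_eq algebra_simps power2_eq_square)
  have "tan (x / 2) * sin x = sin x ^ 2 / (1 + cos x)"
    unfolding tan by (simp add: power2_eq_square)
  then show "1 - cos x = tan (x / 2) * sin x"
    using pos sin2 by simp
  have "tan (x / 2) ^ 2 = (1 - cos x) * (1 + cos x) / ((1 + cos x) * (1 + cos x))"
    unfolding tan power_divide sin2 by (simp add: power2_eq_square)
  then show "tan (x / 2) ^ 2 = (1 - cos x) / (1 + cos x)"
    using pos by simp
qed

definition base_angle :: "nat \<Rightarrow> real" where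
  "base_angle N = pi / (real N + 1)"

lemma base_angle_bounds: "N \<ge> 1 \<Longrightarrow> 0 < base_angle N \<and> base_angle N \<le> pi / 2"
  by (simp add: base_angle_def field_simps)

lemma sin_base_angle_pos: "N \<ge> 1 \<Longrightarrow> sin (base_angle N) > 0"
  using base_angle_bounds[of N] by (intro sin_gt_zero) auto

lemma cos_base_angle_gt_minus_one: "N \<ge> 1 \<Longrightarrow> cos (base_angle N) > -1"
  using base_angle_bounds[of N] cos_ge_zero[of "base_angle N"] by auto

lemma cis_quadratic_mult_chebyshev_U_sum_base_angle:
  assumes "N \<ge> 1"
  shows "cis_quadratic (base_angle N) * chebyshev_U_sum (base_angle N) N = monom 1 (N + 1) + 1"
proof -
  have "real (Suc N) * base_angle N = pi" and "real (Suc (N - 1)) * base_angle N = pi - base_angle N"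
    using assms by (simp_all add: base_angle_def field_simps)
  then have "chebyshev_U (base_angle N) N = 0" and "chebyshev_U (base_angle N) (N - 1) = 1"
    using sin_base_angle_pos[OF assms] by (simp_all add: chebyshev_U_def)
  then show ?thesis
    using cis_quadratic_mult_chebyshev_U_sum[OF _ assms] sin_base_angle_pos[OF assms]
    by (intro poly_eq_poly_eq_iff[THEN iffD1]) (simp add: fun_eq_iff poly_monom)
qed

definition eta_cofactor :: "nat \<Rightarrow> complex poly" where
  "eta_cofactor N = (if even N then [:1, 1:] else 1) * (\<Prod>j\<in>{1..(N - 1) div 2}. cis_quadratic (psi 1 N j))"

lemma eta_poly_1: "eta_poly 1 N = [:0, 1:] * eta_cofactor N"
proof -
  have "even N \<Longrightarrow> (N - 2) div 2 = (N - 1) div 2" by presburger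
  then show ?thesis
    unfolding eta_poly_def eta_cofactor_def cis_quadratic_def by (simp add: mult.assoc)
qed

lemma cis_psi_1: "cis (psi 1 N j) = neg_one_root (N + 1) j"
  by (simp add: psi_def neg_one_root_def algebra_simps)

lemma poly_eta_cofactor_neg_one_root:
  assumes "k \<le> N"
  shows "poly (eta_cofactor N * cis_quadratic (base_angle N)) (neg_one_root (N + 1) k) = 0"
proof -
  let ?\<omega> = "neg_one_root (N + 1) k"
  have cofactor_root: "poly (eta_cofactor N) ?\<omega> = 0"
    if "j \<in> {1..(N - 1) div 2}" "?\<omega> = cis (psi 1 N j) \<or> ?\<omega> = cis (- psi 1 N j)" for j
    using that poly_cis_quadratic_root[OF that(2)]
    by (auto simp: eta_cofactor_def poly_prod intro!: bexI[of _ j])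
  (* \<omega>_0 and \<omega>_N are the roots e^(\<plusminus>i\<theta>) of the quadratic, \<omega>_(N/2) = -1, and the others are e^(\<plusminus>i\<psi>_j). *)
  consider "k = 0" | "k = N" | "1 \<le> k" "2 * k < N" | "N < 2 * k" "k < N" | "2 * k = N"
    using assms by linarith
  then show ?thesis
  proof cases
    case 1
    then have "?\<omega> = cis (base_angle N)"
      by (simp add: neg_one_root_def base_angle_def add.commute)
    then show ?thesis by (simp add: poly_cis_quadratic_root)
  next
    case 2
    have "?\<omega> = cis (2 * pi - base_angle N)"
      unfolding 2 neg_one_root_def base_angle_def by (simp add: field_simps)
    also have "\<dots> = cis (- base_angle N)"
      by (rule cis_two_pi_minus)
    finally show ?thesis by (simp add: poly_cis_quadratic_root)
  next
    case 3
    then have "poly (eta_cofactor N) ?\<omega> = 0"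
      using cofactor_root[of k, OF _ disjI1[OF cis_psi_1[symmetric]]] by simp
    then show ?thesis by simp
  next
    case 4
    have "?\<omega> = cis (2 * pi - psi 1 N (N - k))"
      unfolding neg_one_root_def psi_def using 4 by (simp add: field_simps of_nat_diff)
    also have "\<dots> = cis (- psi 1 N (N - k))"
      by (rule cis_two_pi_minus)
    moreover have "N - k \<in> {1..(N - 1) div 2}"
      using 4 by auto
    ultimately show ?thesis
      using cofactor_root[of "N - k"] by simp
  next
    case 5
    then have "2 * real k + 1 = real N + 1"
      by linarith
    then have "?\<omega> = -1"
      by (simp add: neg_one_root_def add.commute)
    then show ?thesis
      using 5 by (auto simp: eta_cofactor_def)
  qed
qed

lemma
  shows lead_coeff_eta_cofactor: "lead_coeff (eta_cofactor N) = 1"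
    and degree_eta_cofactor: "N \<ge> 1 \<Longrightarrow> degree (eta_cofactor N) = N - 1"
proof -
  define c :: "complex poly" where "c = (if even N then [:1, 1:] else 1)"
  define Q where "Q = (\<Prod>j\<in>{1..(N - 1) div 2}. cis_quadratic (psi 1 N j))"
  have eta: "eta_cofactor N = c * Q"
    unfolding eta_cofactor_def c_def Q_def ..
  have "lead_coeff Q = 1"
    unfolding Q_def by (simp add: lead_coeff_prod lead_coeff_cis_quadratic)
  moreover have "lead_coeff c = 1"
    unfolding c_def by simp
  ultimately show "lead_coeff (eta_cofactor N) = 1"
    unfolding eta by (simp add: lead_coeff_mult)
  have "degree Q = 2 * ((N - 1) div 2)"
    unfolding Q_def
    by (subst degree_prod_eq_sum_degree) (auto simp: cis_quadratic_nonzero degree_cis_quadratic)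
  moreover have "degree c = (if even N then 1 else 0)"
    unfolding c_def by simp
  moreover have "c \<noteq> 0" "Q \<noteq> 0"
    using \<open>lead_coeff c = 1\<close> \<open>lead_coeff Q = 1\<close> by auto
  ultimately show "N \<ge> 1 \<Longrightarrow> degree (eta_cofactor N) = N - 1"
    unfolding eta by (simp add: degree_mult_eq) presburger
qed

lemma eta_cofactor_mult_cis_quadratic:
  assumes "N \<ge> 1"
  shows "eta_cofactor N * cis_quadratic (base_angle N) = monom 1 (N + 1) + 1"
proof (rule poly_eqI_degree_lead_coeff[where n = "N + 1" and A = "neg_one_root (N + 1) ` {..<N + 1}"])
  have "eta_cofactor N \<noteq> 0"
    using lead_coeff_eta_cofactor[of N] by auto
  then have "degree (eta_cofactor N * cis_quadratic (base_angle N)) = N + 1"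
    using assms by (simp add: degree_mult_eq cis_quadratic_nonzero degree_cis_quadratic degree_eta_cofactor)
  moreover have "lead_coeff (eta_cofactor N * cis_quadratic (base_angle N)) = 1"
    by (simp add: lead_coeff_mult lead_coeff_eta_cofactor lead_coeff_cis_quadratic)
  ultimately show "degree (eta_cofactor N * cis_quadratic (base_angle N)) \<le> N + 1"
    and "coeff (eta_cofactor N * cis_quadratic (base_angle N)) (N + 1) = coeff (monom 1 (N + 1) + 1) (N + 1)"
    by (simp_all add: coeff_monom)
  show "degree (monom (1 :: complex) (N + 1) + 1) \<le> N + 1"
    by (rule order.trans[OF degree_add_le_max]) (simp add: degree_monom_le)
  show "N + 1 \<le> card (neg_one_root (N + 1) ` {..<N + 1})"
    by (simp add: card_image inj_on_neg_one_root)
  fix z assume "z \<in> neg_one_root (N + 1) ` {..<N + 1}"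
  then show "poly (eta_cofactor N * cis_quadratic (base_angle N)) z = poly (monom 1 (N + 1) + 1) z"
    using poly_eta_cofactor_neg_one_root neg_one_root_power[of "N + 1"] by (auto simp: poly_monom)
qed

lemma eta_cofactor_eq_chebyshev_U_sum:
  assumes "N \<ge> 1"
  shows "eta_cofactor N = chebyshev_U_sum (base_angle N) N"
  using eta_cofactor_mult_cis_quadratic[OF assms] cis_quadratic_mult_chebyshev_U_sum_base_angle[OF assms]
    cis_quadratic_nonzero
  by (metis mult.commute mult_right_cancel)

lemma q_bracket_1:
  assumes "eta_poly 1 N = [:0, 1:] * P"
  shows "q_bracket 1 N = smult (of_nat N) P - [:0, 1:] * pderiv P"
proof -
  have "eta_poly 1 N div [:0, 1:] = P"
    unfolding assms by (rule nonzero_mult_div_cancel_left) simp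
  moreover have "pderiv (eta_poly 1 N) = P + [:0, 1:] * pderiv P"
    unfolding assms pderiv_mult by (simp add: pderiv_pCons)
  ultimately show ?thesis
    unfolding q_bracket_def by (simp add: smult_add_left algebra_simps)
qed

lemma q_bracket_1_eq:
  assumes "N \<ge> 1"
  shows "q_bracket 1 N = smult (of_nat N) (chebyshev_U_sum (base_angle N) N)
    - [:0, 1:] * pderiv (chebyshev_U_sum (base_angle N) N)"
  using q_bracket_1 eta_poly_1 eta_cofactor_eq_chebyshev_U_sum[OF assms] by simp

lemma poly_q_bracket_1:
  assumes "N \<ge> 1"
  shows "poly (q_bracket 1 N) z =
    (\<Sum>k<N. of_nat (N - k) * complex_of_real (chebyshev_U (base_angle N) k) * z ^ k)"
  unfolding q_bracket_1_eq[OF assms] chebyshev_U_sum_def by (rule poly_smult_minus_X_pderiv_sum)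

lemma poly_cis_quadratic_mult_q_bracket_1:
  assumes "N \<ge> 1" and "x\<^sup>2 = 1"
  shows "poly (cis_quadratic (base_angle N)) x * poly (q_bracket 1 N) x = of_nat (N + 1)"
  using poly_mult_smult_minus_X_pderiv[OF cis_quadratic_mult_chebyshev_U_sum_base_angle[OF assms(1)]
      X_mult_poly_pderiv_cis_quadratic[OF assms(2)]]
  unfolding q_bracket_1_eq[OF assms(1)] by simp

lemma poly_q_poly_1: "poly (q_poly 1 N) z = poly (q_bracket 1 N) z / poly (q_bracket 1 N) 1"
proof -
  have "complex_of_real (2 + (real N - 1) * real (1 :: nat)) = of_nat (N + 1)"
    by simp
  moreover have "(of_nat (N + 1) :: complex) \<noteq> 0"
    by (simp only: of_nat_eq_0_iff)
  ultimately show ?thesis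
    unfolding q_poly_def K_const_def by (simp del: of_nat_Suc)
qed

lemma poly_q_poly_1_eq:
  assumes "N \<ge> 1"
  shows "poly (q_poly 1 N) z = poly (cis_quadratic (base_angle N)) 1 / of_nat (N + 1) * poly (q_bracket 1 N) z"
proof -
  have prod: "poly (cis_quadratic (base_angle N)) 1 * poly (q_bracket 1 N) 1 = of_nat (N + 1)"
    using poly_cis_quadratic_mult_q_bracket_1[OF assms, of 1] by simp
  have "poly (cis_quadratic (base_angle N)) 1 \<noteq> 0"
    using prod of_nat_neq_0[of N] by auto
  then have "poly (q_poly 1 N) z =
      poly (cis_quadratic (base_angle N)) 1 * poly (q_bracket 1 N) z /
      (poly (cis_quadratic (base_angle N)) 1 * poly (q_bracket 1 N) 1)"
    unfolding poly_q_poly_1 by simp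
  then show ?thesis
    unfolding prod by simp
qed

lemma poly_q_poly_1_minus_one:
  assumes "N \<ge> 1"
  shows "poly (q_poly 1 N) (-1) =
    complex_of_real ((1 - cos (base_angle N)) / (1 + cos (base_angle N)))"
proof -
  have "complex_of_real (2 + 2 * cos (base_angle N)) * poly (q_bracket 1 N) (-1) = of_nat (N + 1)"
    using poly_cis_quadratic_mult_q_bracket_1[OF assms, of "-1"]
    unfolding poly_cis_quadratic_one_minus_one by simp
  moreover have "complex_of_real (2 + 2 * cos (base_angle N)) \<noteq> 0"
    using cos_base_angle_gt_minus_one[OF assms] by (simp only: of_real_eq_0_iff)
  ultimately have "poly (q_bracket 1 N) (-1) = of_nat (N + 1) / complex_of_real (2 + 2 * cos (base_angle N))"
    by (simp add: eq_divide_eq mult.commute)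
  then have "poly (q_poly 1 N) (-1) = complex_of_real ((2 - 2 * cos (base_angle N)) / (2 + 2 * cos (base_angle N)))"
    unfolding poly_q_poly_1_eq[OF assms] poly_cis_quadratic_one_minus_one
    by (simp del: of_nat_Suc)
  also have "(2 - 2 * cos (base_angle N)) / (2 + 2 * cos (base_angle N)) =
      (1 - cos (base_angle N)) / (1 + cos (base_angle N))"
    by (simp add: divide_simps algebra_simps)
  finally show ?thesis .
qed

lemma poly_q_poly_1_eq_sum:
  assumes "N \<ge> 1"
  shows "poly (q_poly 1 N) z = complex_of_real (2 * tan (base_angle N / 2)) *
    (\<Sum>j=1..N. complex_of_real ((1 - real j / (real N + 1)) * sin (real j * base_angle N)) * z ^ (j - 1))"
proof -
  let ?\<theta> = "base_angle N"
  have sin_pos: "sin ?\<theta> > 0"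
    using sin_base_angle_pos[OF assms] .
  have tan_sin: "2 - 2 * cos ?\<theta> = 2 * tan (?\<theta> / 2) * sin ?\<theta>"
    using one_minus_cos_eq_tan_half_mul_sin[of ?\<theta>] cos_base_angle_gt_minus_one[OF assms] by auto
  have coeff: "(2 - 2 * cos ?\<theta>) / real (N + 1) * (real (N - k) * chebyshev_U ?\<theta> k) =
      2 * tan (?\<theta> / 2) * ((1 - real (Suc k) / (real N + 1)) * sin (real (Suc k) * ?\<theta>))" if "k < N" for k
  proof -
    define S where "S = sin (real (Suc k) * ?\<theta>)"
    have "(2 - 2 * cos ?\<theta>) / real (N + 1) * (real (N - k) * chebyshev_U ?\<theta> k) =
        2 * tan (?\<theta> / 2) * (real (N - k) / real (N + 1) * S)"
      using sin_pos unfolding tan_sin chebyshev_U_def S_def[symmetric] by (simp add: field_simps)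
    also have "real (N - k) / real (N + 1) = 1 - real (Suc k) / (real N + 1)"
      using that by (simp add: of_nat_diff field_simps)
    finally show ?thesis
      unfolding S_def .
  qed
  have "poly (q_poly 1 N) z =
      (\<Sum>k<N. complex_of_real ((2 - 2 * cos ?\<theta>) / real (N + 1) * (real (N - k) * chebyshev_U ?\<theta> k)) * z ^ k)"
    unfolding poly_q_poly_1_eq[OF assms] poly_q_bracket_1[OF assms] poly_cis_quadratic_one_minus_one
      sum_distrib_left
    by (intro sum.cong) (simp_all add: field_simps)
  also have "\<dots> = complex_of_real (2 * tan (?\<theta> / 2)) *
      (\<Sum>k<N. complex_of_real ((1 - real (Suc k) / (real N + 1)) * sin (real (Suc k) * ?\<theta>)) * z ^ k)"
    unfolding sum_distrib_left
    by (intro sum.cong refl) (simp only: lessThan_iff coeff of_real_mult mult.assoc)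
  also have "(\<Sum>k<N. complex_of_real ((1 - real (Suc k) / (real N + 1)) * sin (real (Suc k) * ?\<theta>)) * z ^ k) =
      (\<Sum>j=1..N. complex_of_real ((1 - real j / (real N + 1)) * sin (real j * ?\<theta>)) * z ^ (j - 1))"
    by (simp add: sum.atLeast1_atMost_eq)
  finally show ?thesis .
qed

theorem mainTheorem4:
  fixes N :: nat
  assumes "N \<ge> 1"
  shows "(\<forall>z::complex. poly (q_poly 1 N) z =
            complex_of_real (2 * tan (pi / (2 * (real N + 1)))) *
            (\<Sum>j=1..N. complex_of_real ((1 - real j / (real N + 1)) * sin (pi * real j / (real N + 1)))
                        * z ^ (j - 1)))
         \<and> poly (q_poly 1 N) (-1) = complex_of_real ((tan (pi / (2 * (real N + 1)))) ^ 2)"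
proof -
  have half: "pi / (2 * (real N + 1)) = base_angle N / 2"
    and angle: "pi * real j / (real N + 1) = real j * base_angle N" for j
    by (simp_all add: base_angle_def)
  have "tan (base_angle N / 2) ^ 2 = (1 - cos (base_angle N)) / (1 + cos (base_angle N))"
    using tan_half_squared cos_base_angle_gt_minus_one[OF assms] by auto
  then show ?thesis
    unfolding half angle using poly_q_poly_1_eq_sum[OF assms] poly_q_poly_1_minus_one[OF assms] by simp
qed

end
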